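(* Let $\eta > 0$, let $\mathbf{a} \in \mathbb{R}_+^n$, $\mathbf{b} \in \mathbb{R}_+^m$ with $\mathbf{1}_n^\top\mathbf{a} = \mathbf{1}_m^\top\mathbf{b} = 1$, let $\mathcal{D} = U(\mu,\nu) = \{\boldsymbol{\Pi} \in \mathbb{R}_+^{n\times m} : \boldsymbol{\Pi}\mathbf{1}_m = \mathbf{a},\ \boldsymbol{\Pi}^\top\mathbf{1}_n = \mathbf{b}\}$, and let $\mathbf{C}_1,\ldots,\mathbf{C}_L \in \mathbb{R}^{n\times m}$. Let $$G_\eta(\boldsymbol{\Pi}) = \eta \log\left( \sum_{\ell=1}^L \exp\left( \tfrac{1}{\eta}\langle \boldsymbol{\Pi}, \mathbf{C}_\ell \rangle \right) \right)$$ and let $\boldsymbol{\Pi}^\ast \in \arg\min_{\boldsymbol{\Pi}\in\mathcal{D}} G_\eta(\boldsymbol{\Pi})$. Consider the Frank--Wolfe iteration: start from $\boldsymbol{\Pi}^{(0)} \in \mathcal{D}$, and for $t = 0, 1, 2, \ldots$ set $$\alpha_\ell^{(t)} = \frac{\exp\left(\frac{1}{\eta}\langle \boldsymbol{\Pi}^{(t)}, \mathbf{C}_\ell\rangle\right)}{\sum_{\ell'=1}^L \exp\left(\frac{1}{\eta}\langle \boldsymbol{\Pi}^{(t)}, \mathbf{C}_{\ell'}\rangle\right)}, \qquad \mathbf{M}_{\boldsymbol{\Pi}^{(t)}} = \sum_{\ell=1}^L \alpha_\ell^{(t)} \mathbf{C}_\ell = \nabla G_\eta(\boldsymbol{\Pi}^{(t)}),$$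 let $\gamma_t = 2/(t+2)$, let $\widehat{\boldsymbol{\Pi}} \in \mathcal{D}$ be an approximate solution of the linear subproblem $\min_{\boldsymbol{\Pi}\in\mathcal{D}} \langle \boldsymbol{\Pi}, \mathbf{M}_{\boldsymbol{\Pi}^{(t)}}\rangle$ with accuracy $\delta \geq 0$, i.e. $\langle \widehat{\boldsymbol{\Pi}}, \mathbf{M}_{\boldsymbol{\Pi}^{(t)}}\rangle \leq \min_{\boldsymbol{\Pi}\in\mathcal{D}} \langle \boldsymbol{\Pi}, \mathbf{M}_{\boldsymbol{\Pi}^{(t)}}\rangle + \tfrac{1}{2}\delta\gamma_t C_f$, and set $\boldsymbol{\Pi}^{(t+1)} = (1-\gamma_t)\boldsymbol{\Pi}^{(t)} + \gamma_t \widehat{\boldsymbol{\Pi}}$. Then for each $t \geq 1$, $$G_\eta(\boldsymbol{\Pi}^{(t)}) - G_\eta(\boldsymbol{\Pi}^\ast) \leq \frac{4\sigma_{\max}(\boldsymbol{\Phi}^\top\boldsymbol{\Phi})}{\eta(t+2)}(1+\delta),$$ where $\boldsymbol{\Phi} = (\mathrm{vec}(\mathbf{C}_1), \ldots, \mathrm{vec}(\mathbf{C}_L))$ (the matrix whose columns are the vectorized cost matrices) and $\sigma_{\max}(\boldsymbol{\Phi}^\top\boldsymbol{\Phi})$ is the largest eigenvalue of $\boldsymbol{\Phi}^\top\boldsymbol{\Phi}$.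
   Context: $\langle \mathbf{A}, \mathbf{B}\rangle = \sum_{i,j}A_{ij}B_{ij}$. $C_f$ denotes the curvature constant of $f = G_\eta$ on $\mathcal{D}$: $C_f = \sup \frac{2}{\gamma^2}\big(f(\boldsymbol{\Pi}') - f(\boldsymbol{\Pi}) - \langle \boldsymbol{\Pi}'-\boldsymbol{\Pi}, \nabla f(\boldsymbol{\Pi})\rangle\big)$ over $\boldsymbol{\Pi}, \widehat{\boldsymbol{\Pi}} \in \mathcal{D}$, $\gamma\in[0,1]$, $\boldsymbol{\Pi}' = \boldsymbol{\Pi} + \gamma(\widehat{\boldsymbol{\Pi}} - \boldsymbol{\Pi})$. The accuracy parameter $\delta$ is in the sense of Jaggi's approximate linear-minimization oracle for Frank--Wolfe (in practice the subproblem may be solved exactly by linear programming or approximately by the entropic-regularized Sinkhorn algorithm). *)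

theory Defs
  imports "HOL-Analysis.Analysis"
begin

text \<open>Matrices in R^{n x m} are represented as real^'m^'n (rows indexed by 'n).
  The L cost matrices are a family C :: 'l \<Rightarrow> real^'m^'n over a finite index type 'l.\<close>

definition frob :: "real^'m::finite^'n::finite \<Rightarrow> real^'m^'n \<Rightarrow> real" where
  "frob A B = (\<Sum>i\<in>UNIV. \<Sum>j\<in>UNIV. A $ i $ j * B $ i $ j)"

definition transport_polytope :: "real^'n::finite \<Rightarrow> real^'m::finite \<Rightarrow> (real^'m^'n) set" where
  "transport_polytope a b =
     {P. (\<forall>i j. 0 \<le> P $ i $ j) \<and> (\<forall>i. (\<Sum>j\<in>UNIV. P $ i $ j) = a $ i)
         \<and> (\<forall>j. (\<Sum>i\<in>UNIV. P $ i $ j) = b $ j)}"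

definition G_eta :: "real \<Rightarrow> ('l::finite \<Rightarrow> real^'m::finite^'n::finite) \<Rightarrow> real^'m^'n \<Rightarrow> real" where
  "G_eta \<eta> C P = \<eta> * ln (\<Sum>l\<in>UNIV. exp (frob P (C l) / \<eta>))"

definition alpha_w :: "real \<Rightarrow> ('l::finite \<Rightarrow> real^'m::finite^'n::finite) \<Rightarrow> real^'m^'n \<Rightarrow> 'l \<Rightarrow> real" where
  "alpha_w \<eta> C P l = exp (frob P (C l) / \<eta>) / (\<Sum>l'\<in>UNIV. exp (frob P (C l') / \<eta>))"

definition M_grad :: "real \<Rightarrow> ('l::finite \<Rightarrow> real^'m::finite^'n::finite) \<Rightarrow> real^'m^'n \<Rightarrow> real^'m^'n" where
  "M_grad \<eta> C P = (\<Sum>l\<in>UNIV. alpha_w \<eta> C P l *\<^sub>R C l)"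

text \<open>Curvature constant C_f of f = G_eta on D (gamma ranging over (0,1]; gamma = 0 makes
  the quotient undefined).\<close>
definition curvature_const ::
  "real \<Rightarrow> ('l::finite \<Rightarrow> real^'m::finite^'n::finite) \<Rightarrow> (real^'m^'n) set \<Rightarrow> real" where
  "curvature_const \<eta> C D =
     (SUP (P, Q, \<gamma>) \<in> {(P, Q, \<gamma>). P \<in> D \<and> Q \<in> D \<and> 0 < \<gamma> \<and> \<gamma> \<le> 1}.
        2 / \<gamma>\<^sup>2 * (G_eta \<eta> C (P + \<gamma> *\<^sub>R (Q - P)) - G_eta \<eta> C P
                     - frob ((P + \<gamma> *\<^sub>R (Q - P)) - P) (M_grad \<eta> C P)))"

definition Phi_mat :: "('l::finite \<Rightarrow> real^'m::finite^'n::finite) \<Rightarrow> real^'l^('n \<times> 'm)" where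
  "Phi_mat C = (\<chi> ij l. C l $ fst ij $ snd ij)"

definition max_eigenvalue :: "real^'k::finite^'k \<Rightarrow> real" where
  "max_eigenvalue A = Max {e. \<exists>v. v \<noteq> 0 \<and> A *v v = e *\<^sub>R v}"

end

theory Submission
  imports Defs
begin

(*
  G_eta is a log-sum-exp of the linear functionals P \<mapsto> <P, C_l> / eta. It is therefore convex
  with gradient M_P, and a second-order Taylor expansion bounds its remainder by
  (1 / (2 eta)) * sum_l <X, C_l>^2 = |Phi^T vec X|^2 / (2 eta) <= sigma_max |X|^2 / (2 eta), where
  sigma_max is obtained as the maximum of the Rayleigh quotient of Phi^T Phi on the unit sphere.
  The transport polytope has squared diameter at most 2, so C_f <= 2 sigma_max / eta. Jaggi's
  analysis of Frank-Wolfe with step 2/(t+2) and a delta-approximate linear oracle gives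
  h (t+1) <= (1 - gamma_t) h t + gamma_t^2 / 2 * C_f (1 + delta) for the gap h t = G(P t) - G(Pstar),
  and induction yields h t <= 2 C_f (1 + delta) / (t + 2).
*)

lemma frob_eq_inner: "frob A B = A \<bullet> B"
  by (simp add: frob_def inner_vec_def)

lemma quadratic_nonpos_imp_linear_coeff_zero:
  fixes a b :: real
  assumes "\<And>t. 2 * t * a + t\<^sup>2 * b \<le> 0"
  shows "a = 0"
proof -
  define c where "c = \<bar>b\<bar> + 1"
  define t where "t = a / c"
  have "c > 0" and "2 * c + b > 0" unfolding c_def by (simp_all add: abs_if)
  then have "t * c = a" unfolding t_def by simp
  have "c\<^sup>2 * (2 * t * a + t\<^sup>2 * b) = 2 * (t * c) * a * c + (t * c)\<^sup>2 * b"
    by (simp add: algebra_simps power2_eq_square)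
  also have "\<dots> = a\<^sup>2 * (2 * c + b)"
    unfolding \<open>t * c = a\<close> by (simp add: algebra_simps power2_eq_square)
  finally have "a\<^sup>2 * (2 * c + b) \<le> 0"
    using assms[of t] by (metis mult_nonneg_nonpos zero_le_power2)
  then have "a\<^sup>2 \<le> 0"
    using \<open>2 * c + b > 0\<close> by (simp add: mult_le_0_iff)
  then show ?thesis by simp
qed

lemma symmetric_matrix_inner_swap:
  fixes A :: "real^'k::finite^'k"
  assumes "transpose A = A"
  shows "x \<bullet> (A *v y) = (A *v x) \<bullet> y"
  using assms by (metis dot_lmul_matrix transpose_transpose transpose_matrix_vector)

lemma symmetric_matrix_quadratic_form_maximizer_eigenvector:
  fixes A :: "real^'k::finite^'k"
  assumes sym: "transpose A = A"
    and le: "\<And>u. u \<bullet> (A *v u) \<le> \<mu> * (u \<bullet> u)"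
    and eq: "v \<bullet> (A *v v) = \<mu> * (v \<bullet> v)"
  shows "A *v v = \<mu> *\<^sub>R v"
proof -
  define q where "q u = u \<bullet> (A *v u) - \<mu> * (u \<bullet> u)" for u
  define r where "r = A *v v - \<mu> *\<^sub>R v"
  have linear_coeff: "v \<bullet> (A *v r) + r \<bullet> (A *v v) - 2 * \<mu> * (r \<bullet> v) = 2 * (r \<bullet> r)"
    using symmetric_matrix_inner_swap[OF sym, of v r]
    by (simp add: r_def inner_diff_left inner_diff_right inner_commute algebra_simps)
  have expand: "q (v + t *\<^sub>R r) = q v + t * (2 * (r \<bullet> r)) + t\<^sup>2 * q r" for t
    unfolding linear_coeff[symmetric] q_def
    by (simp add: matrix_vector_right_distrib matrix_vector_mult_scaleR inner_add_left
        inner_add_right inner_commute power2_eq_square algebra_simps)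
  have "q v = 0" and nonpos: "\<And>u. q u \<le> 0" using eq le by (simp_all add: q_def)
  then have "2 * t * (r \<bullet> r) + t\<^sup>2 * q r \<le> 0" for t
    using expand[of t] nonpos[of "v + t *\<^sub>R r"] by simp
  then have "r \<bullet> r = 0" by (rule quadratic_nonpos_imp_linear_coeff_zero)
  then show ?thesis unfolding r_def by simp
qed

lemma symmetric_matrix_rayleigh_eigenvalue:
  fixes A :: "real^'k::finite^'k"
  assumes sym: "transpose A = A"
  obtains \<mu> v where "v \<noteq> 0" "A *v v = \<mu> *\<^sub>R v" "\<And>u. u \<bullet> (A *v u) \<le> \<mu> * (u \<bullet> u)"
proof -
  define q where "q u = u \<bullet> (A *v u)" for u
  have "continuous_on (sphere 0 1) q"
    unfolding q_def by (intro continuous_intros linear_continuous_on matrix_vector_mul_linear)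
  moreover have "sphere (0::real^'k) 1 \<noteq> {}" by simp
  ultimately obtain v where v: "v \<in> sphere 0 1" and max: "\<And>w. w \<in> sphere 0 1 \<Longrightarrow> q w \<le> q v"
    using continuous_attains_sup[OF compact_sphere] by blast
  have bound: "q u \<le> q v * (u \<bullet> u)" for u
  proof (cases "u = 0")
    case False
    have "q u = (norm u)\<^sup>2 * q ((1 / norm u) *\<^sub>R u)"
      using False by (simp add: q_def matrix_vector_mult_scaleR power2_eq_square)
    also have "\<dots> \<le> (norm u)\<^sup>2 * q v"
      using False by (intro mult_left_mono max) auto
    finally show ?thesis by (simp add: power2_norm_eq_inner mult.commute)
  qed (simp add: q_def)
  have "v \<bullet> v = 1" using v by (simp add: dot_square_norm)
  then have "A *v v = q v *\<^sub>R v"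
    using bound by (intro symmetric_matrix_quadratic_form_maximizer_eigenvector[OF sym]) (simp_all add: q_def)
  moreover have "v \<noteq> 0" using v by auto
  ultimately show ?thesis using that bound unfolding q_def by blast
qed

lemma symmetric_matrix_finite_eigenvalues:
  fixes A :: "real^'k::finite^'k"
  assumes sym: "transpose A = A"
  shows "finite {e. \<exists>v. v \<noteq> 0 \<and> A *v v = e *\<^sub>R v}" (is "finite ?E")
proof -
  define f where "f e = (SOME v. v \<noteq> 0 \<and> A *v v = e *\<^sub>R v)" for e
  have f: "f e \<noteq> 0 \<and> A *v f e = e *\<^sub>R f e" if "e \<in> ?E" for e
    using that unfolding f_def by (metis (mono_tags, lifting) mem_Collect_eq someI)
  have orth: "f e1 \<bullet> f e2 = 0" if "e1 \<in> ?E" "e2 \<in> ?E" "e1 \<noteq> e2" for e1 e2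
  proof -
    have "e1 * (f e1 \<bullet> f e2) = (A *v f e1) \<bullet> f e2" using f[OF that(1)] by simp
    also have "\<dots> = f e1 \<bullet> (A *v f e2)" using symmetric_matrix_inner_swap[OF sym] by simp
    also have "\<dots> = e2 * (f e1 \<bullet> f e2)" using f[OF that(2)] by simp
    finally show ?thesis using that(3) by simp
  qed
  have "inj_on f ?E"
  proof (rule inj_onI)
    fix e1 e2 assume "e1 \<in> ?E" "e2 \<in> ?E" "f e1 = f e2"
    then show "e1 = e2" using orth[of e1 e2] f[of e1] by auto
  qed
  moreover have "pairwise orthogonal (f ` ?E)"
    using orth by (auto simp: pairwise_def orthogonal_def)
  moreover have "0 \<notin> f ` ?E"
    using f by force
  ultimately have "independent (f ` ?E)" by (simp add: pairwise_orthogonal_independent)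
  then have "finite (f ` ?E)" by (rule finiteI_independent)
  with \<open>inj_on f ?E\<close> show ?thesis
    using finite_imageD by blast
qed

lemma eigenvalue_le_max_eigenvalue:
  fixes A :: "real^'k::finite^'k"
  assumes "transpose A = A" "v \<noteq> 0" "A *v v = e *\<^sub>R v"
  shows "e \<le> max_eigenvalue A"
  unfolding max_eigenvalue_def
  using assms symmetric_matrix_finite_eigenvalues[OF assms(1)] by (intro Max_ge) auto

lemma quadratic_form_le_max_eigenvalue:
  fixes A :: "real^'k::finite^'k"
  assumes sym: "transpose A = A"
  shows "u \<bullet> (A *v u) \<le> max_eigenvalue A * (u \<bullet> u)"
proof -
  obtain \<mu> v where "v \<noteq> 0" "A *v v = \<mu> *\<^sub>R v" and rayleigh: "u \<bullet> (A *v u) \<le> \<mu> * (u \<bullet> u)"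
    using symmetric_matrix_rayleigh_eigenvalue[OF sym] by metis
  moreover have "\<mu> \<le> max_eigenvalue A"
    using eigenvalue_le_max_eigenvalue[OF sym] calculation by blast
  ultimately show ?thesis
    by (meson inner_ge_zero mult_right_mono order_trans)
qed

lemma gram_matrix_quadratic_form:
  fixes \<Phi> :: "real^'k::finite^'j::finite"
  shows "u \<bullet> ((transpose \<Phi> ** \<Phi>) *v u) = (\<Phi> *v u) \<bullet> (\<Phi> *v u)"
proof -
  have "(transpose \<Phi> ** \<Phi>) *v u = transpose \<Phi> *v (\<Phi> *v u)"
    by (simp add: matrix_vector_mul_assoc)
  then show ?thesis
    by (metis dot_lmul_matrix inner_commute transpose_matrix_vector)
qed

lemma max_eigenvalue_gram_nonneg:
  fixes \<Phi> :: "real^'k::finite^'j::finite"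
  shows "0 \<le> max_eigenvalue (transpose \<Phi> ** \<Phi>)"
proof -
  have sym: "transpose (transpose \<Phi> ** \<Phi>) = transpose \<Phi> ** \<Phi>"
    by (simp add: matrix_transpose_mul)
  obtain \<mu> v where v: "v \<noteq> 0" "(transpose \<Phi> ** \<Phi>) *v v = \<mu> *\<^sub>R v"
    using symmetric_matrix_rayleigh_eigenvalue[OF sym] by metis
  then have "\<mu> * (v \<bullet> v) = (\<Phi> *v v) \<bullet> (\<Phi> *v v)"
    by (metis gram_matrix_quadratic_form inner_scaleR_right)
  then have "0 \<le> \<mu>"
    using v(1) by (metis inner_ge_zero inner_gt_zero_iff zero_le_mult_iff linorder_not_le)
  also have "\<mu> \<le> max_eigenvalue (transpose \<Phi> ** \<Phi>)"
    using eigenvalue_le_max_eigenvalue[OF sym v] .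
  finally show ?thesis .
qed

lemma norm_transpose_mult_le_max_eigenvalue:
  fixes \<Phi> :: "real^'k::finite^'j::finite"
  shows "(norm (transpose \<Phi> *v y))\<^sup>2 \<le> max_eigenvalue (transpose \<Phi> ** \<Phi>) * (norm y)\<^sup>2"
proof -
  define \<sigma> where "\<sigma> = max_eigenvalue (transpose \<Phi> ** \<Phi>)"
  define u where "u = transpose \<Phi> *v y"
  have "(norm (\<Phi> *v u))\<^sup>2 \<le> \<sigma> * (norm u)\<^sup>2"
    using quadratic_form_le_max_eigenvalue[of "transpose \<Phi> ** \<Phi>" u]
    by (simp add: \<sigma>_def matrix_transpose_mul gram_matrix_quadratic_form power2_norm_eq_inner)
  then have \<Phi>u: "norm (\<Phi> *v u) \<le> sqrt \<sigma> * norm u"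
    using real_le_rsqrt by (fastforce simp: real_sqrt_mult)
  have "(norm u)\<^sup>2 = (\<Phi> *v u) \<bullet> y"
    unfolding power2_norm_eq_inner u_def by (metis dot_lmul_matrix inner_commute transpose_matrix_vector)
  also have "\<dots> \<le> sqrt \<sigma> * norm u * norm y"
    by (metis \<Phi>u norm_cauchy_schwarz mult_right_mono norm_ge_zero order_trans)
  finally have "norm u \<le> sqrt \<sigma> * norm y"
    using max_eigenvalue_gram_nonneg[of \<Phi>] unfolding \<sigma>_def[symmetric]
    by (cases "norm u = 0") (auto simp: power2_eq_square mult.commute mult.left_commute)
  then have "(norm u)\<^sup>2 \<le> (sqrt \<sigma> * norm y)\<^sup>2"
    by (simp add: power_mono)
  then show ?thesis
    using max_eigenvalue_gram_nonneg[of \<Phi>] by (simp add: u_def \<sigma>_def power_mult_distrib)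
qed

lemma sum_inner_square_le_max_eigenvalue:
  fixes C :: "'l::finite \<Rightarrow> real^'m::finite^'n::finite"
  shows "(\<Sum>l\<in>UNIV. (X \<bullet> C l)\<^sup>2) \<le> max_eigenvalue (transpose (Phi_mat C) ** Phi_mat C) * (X \<bullet> X)"
proof -
  define y :: "real^('n \<times> 'm)" where "y = (\<chi> ij. X $ fst ij $ snd ij)"
  have sum_pairs: "(\<Sum>p\<in>UNIV. f p) = (\<Sum>i\<in>UNIV. \<Sum>j\<in>UNIV. f (i, j))" for f :: "'n \<times> 'm \<Rightarrow> real"
    by (simp add: sum.cartesian_product UNIV_Times_UNIV[symmetric] del: UNIV_Times_UNIV)
  have "(transpose (Phi_mat C) *v y) $ l = X \<bullet> C l" for l
    by (simp add: y_def Phi_mat_def matrix_vector_mult_def transpose_def sum_pairs inner_vec_def mult.commute)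
  then have "(\<Sum>l\<in>UNIV. (X \<bullet> C l)\<^sup>2) = (transpose (Phi_mat C) *v y) \<bullet> (transpose (Phi_mat C) *v y)"
    by (simp add: inner_vec_def power2_eq_square del: transpose_matrix_vector)
  moreover have "(norm y)\<^sup>2 = X \<bullet> X"
    by (simp add: power2_norm_eq_inner inner_vec_def y_def sum_pairs)
  ultimately show ?thesis
    using norm_transpose_mult_le_max_eigenvalue[of "Phi_mat C" y]
    by (simp add: power2_norm_eq_inner del: transpose_matrix_vector)
qed

lemma ln_sum_exp_ge_linearization:
  fixes s h :: "'l::finite \<Rightarrow> real"
  shows "ln (\<Sum>l\<in>UNIV. exp (s l)) + (\<Sum>l\<in>UNIV. exp (s l) / (\<Sum>k\<in>UNIV. exp (s k)) * h l)
     \<le> ln (\<Sum>l\<in>UNIV. exp (s l + h l))"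
proof -
  define S where "S = (\<Sum>l\<in>UNIV. exp (s l))"
  define c where "c = (\<Sum>l\<in>UNIV. exp (s l) * h l) / S"
  have "S > 0" unfolding S_def by (intro sum_pos) auto
  have "(\<Sum>l\<in>UNIV. exp (s l) * (exp c * (1 + (h l - c))))
      = exp c * (S + (\<Sum>l\<in>UNIV. exp (s l) * h l) - c * S)"
    unfolding S_def by (simp add: algebra_simps sum.distrib sum_subtractf sum_distrib_left sum_distrib_right)
  also have "\<dots> = exp c * S"
    using \<open>S > 0\<close> unfolding c_def by simp
  finally have "exp c * S = (\<Sum>l\<in>UNIV. exp (s l) * (exp c * (1 + (h l - c))))" ..
  also have "\<dots> \<le> (\<Sum>l\<in>UNIV. exp (s l) * exp (h l))"
  proof (intro sum_mono mult_left_mono)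
    fix l
    have "exp c * (1 + (h l - c)) \<le> exp c * exp (h l - c)"
      by (simp add: exp_ge_add_one_self)
    then show "exp c * (1 + (h l - c)) \<le> exp (h l)"
      by (simp add: exp_diff)
  qed simp
  finally have "exp c * S \<le> (\<Sum>l\<in>UNIV. exp (s l + h l))"
    by (simp add: exp_add)
  then have "ln (exp c * S) \<le> ln (\<Sum>l\<in>UNIV. exp (s l + h l))"
    using \<open>S > 0\<close> by (intro ln_mono) auto
  then show ?thesis
    using \<open>S > 0\<close> by (simp add: ln_mult S_def c_def sum_divide_distrib)
qed

lemma ln_sum_exp_le_quadratic:
  fixes s h :: "'l::finite \<Rightarrow> real"
  shows "ln (\<Sum>l\<in>UNIV. exp (s l + h l))
     \<le> ln (\<Sum>l\<in>UNIV. exp (s l)) + (\<Sum>l\<in>UNIV. exp (s l) / (\<Sum>k\<in>UNIV. exp (s k)) * h l)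
        + (\<Sum>l\<in>UNIV. (h l)\<^sup>2) / 2"
proof -
  define S where "S t = (\<Sum>l\<in>UNIV. exp (s l + t * h l))" for t
  define S1 where "S1 t = (\<Sum>l\<in>UNIV. exp (s l + t * h l) * h l)" for t
  define S2 where "S2 t = (\<Sum>l\<in>UNIV. exp (s l + t * h l) * (h l)\<^sup>2)" for t
  define F where "F t = ln (S t)" for t
  define F1 where "F1 t = S1 t / S t" for t
  define F2 where "F2 t = S2 t / S t - (S1 t / S t)\<^sup>2" for t
  have S_pos: "S t > 0" for t unfolding S_def by (intro sum_pos) auto
  have "(S has_real_derivative S1 t) (at t)" "(S1 has_real_derivative S2 t) (at t)" for t
    unfolding S_def S1_def S2_def
    by (auto intro!: derivative_eq_intros simp: power2_eq_square mult.assoc)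
  then have "(F has_real_derivative F1 t) (at t)" "(F1 has_real_derivative F2 t) (at t)" for t
    using S_pos[of t] unfolding F_def F1_def F2_def
    by (auto intro!: derivative_eq_intros simp: field_simps power2_eq_square)
  then have "\<forall>m t. m < 2 \<and> 0 \<le> t \<and> t \<le> 1 \<longrightarrow>
      ([F, F1, F2] ! m has_real_derivative ([F, F1, F2] ! Suc m) t) (at t)"
    by (auto simp: less_2_cases_iff)
  from Taylor[of 2 "(!) [F, F1, F2]" F 0 1 0 1, OF _ _ this]
  obtain t where taylor: "F 1 = F 0 + F1 0 + F2 t / 2"
    by (auto simp: lessThan_nat_numeral)
  \<comment> \<open>F2 is the softmax variance of h, bounded by its second moment\<close>
  have "S2 t \<le> (\<Sum>l\<in>UNIV. exp (s l + t * h l) * (\<Sum>k\<in>UNIV. (h k)\<^sup>2))"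
    unfolding S2_def by (intro sum_mono mult_left_mono member_le_sum) auto
  then have "S2 t / S t \<le> (\<Sum>l\<in>UNIV. (h l)\<^sup>2)"
    using S_pos[of t] unfolding S_def by (simp add: sum_distrib_right[symmetric] divide_le_eq mult.commute)
  then have "F2 t \<le> (\<Sum>l\<in>UNIV. (h l)\<^sup>2)"
    unfolding F2_def by (smt (verit) zero_le_power2)
  moreover have "F 1 = ln (\<Sum>l\<in>UNIV. exp (s l + h l))" "F 0 = ln (\<Sum>l\<in>UNIV. exp (s l))"
    and "F1 0 = (\<Sum>l\<in>UNIV. exp (s l) / (\<Sum>k\<in>UNIV. exp (s k)) * h l)"
    by (simp_all add: F_def F1_def S_def S1_def sum_divide_distrib)
  ultimately show ?thesis
    using taylor by linarith
qed

lemma inner_M_grad: "X \<bullet> M_grad \<eta> C P = (\<Sum>l\<in>UNIV. alpha_w \<eta> C P l * (X \<bullet> C l))"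
  by (simp add: M_grad_def inner_sum_right)

lemma G_eta_le_quadratic:
  assumes "\<eta> > 0"
  shows "G_eta \<eta> C (P + X) \<le> G_eta \<eta> C P + X \<bullet> M_grad \<eta> C P + (\<Sum>l\<in>UNIV. (X \<bullet> C l)\<^sup>2) / (2 * \<eta>)"
proof -
  define s where "s l = P \<bullet> C l / \<eta>" for l
  define h where "h l = X \<bullet> C l / \<eta>" for l
  have mean: "\<eta> * (\<Sum>l\<in>UNIV. exp (s l) / (\<Sum>k\<in>UNIV. exp (s k)) * h l) = X \<bullet> M_grad \<eta> C P"
    using assms by (simp add: inner_M_grad alpha_w_def frob_eq_inner s_def h_def sum_distrib_left)
  have square: "\<eta> * ((\<Sum>l\<in>UNIV. (h l)\<^sup>2) / 2) = (\<Sum>l\<in>UNIV. (X \<bullet> C l)\<^sup>2) / (2 * \<eta>)"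
    using assms by (simp add: h_def power_divide sum_divide_distrib[symmetric] power2_eq_square)
  have "G_eta \<eta> C (P + X) = \<eta> * ln (\<Sum>l\<in>UNIV. exp (s l + h l))"
    by (simp add: G_eta_def frob_eq_inner s_def h_def inner_add_left add_divide_distrib)
  also have "\<dots> \<le> \<eta> * (ln (\<Sum>l\<in>UNIV. exp (s l))
      + (\<Sum>l\<in>UNIV. exp (s l) / (\<Sum>k\<in>UNIV. exp (s k)) * h l) + (\<Sum>l\<in>UNIV. (h l)\<^sup>2) / 2)"
    using assms by (intro mult_left_mono ln_sum_exp_le_quadratic) auto
  also have "\<dots> = G_eta \<eta> C P + X \<bullet> M_grad \<eta> C P + (\<Sum>l\<in>UNIV. (X \<bullet> C l)\<^sup>2) / (2 * \<eta>)"
    unfolding distrib_left mean square by (simp add: G_eta_def frob_eq_inner s_def)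
  finally show ?thesis .
qed

lemma G_eta_ge_linearization:
  assumes "\<eta> > 0"
  shows "G_eta \<eta> C P + (Q - P) \<bullet> M_grad \<eta> C P \<le> G_eta \<eta> C Q"
proof -
  define s where "s l = P \<bullet> C l / \<eta>" for l
  define h where "h l = (Q - P) \<bullet> C l / \<eta>" for l
  have "G_eta \<eta> C P + (Q - P) \<bullet> M_grad \<eta> C P
      = \<eta> * (ln (\<Sum>l\<in>UNIV. exp (s l)) + (\<Sum>l\<in>UNIV. exp (s l) / (\<Sum>k\<in>UNIV. exp (s k)) * h l))"
    using assms
    by (simp add: G_eta_def frob_eq_inner inner_M_grad alpha_w_def s_def h_def distrib_left sum_distrib_left)
  also have "\<dots> \<le> \<eta> * ln (\<Sum>l\<in>UNIV. exp (s l + h l))"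
    using assms by (intro mult_left_mono ln_sum_exp_ge_linearization) auto
  also have "\<dots> = G_eta \<eta> C Q"
    by (simp add: G_eta_def frob_eq_inner s_def h_def inner_diff_left diff_divide_distrib)
  finally show ?thesis .
qed

definition curvature_quotient ::
  "real \<Rightarrow> ('l::finite \<Rightarrow> real^'m::finite^'n::finite) \<Rightarrow> real^'m^'n \<Rightarrow> real^'m^'n \<Rightarrow> real \<Rightarrow> real"
  where "curvature_quotient \<eta> C P Q \<gamma> =
    2 / \<gamma>\<^sup>2 * (G_eta \<eta> C (P + \<gamma> *\<^sub>R (Q - P)) - G_eta \<eta> C P - \<gamma> * ((Q - P) \<bullet> M_grad \<eta> C P))"

lemma curvature_const_eq_SUP:
  "curvature_const \<eta> C D =
    (SUP (P, Q, \<gamma>) \<in> {(P, Q, \<gamma>). P \<in> D \<and> Q \<in> D \<and> 0 < \<gamma> \<and> \<gamma> \<le> 1}. curvature_quotient \<eta> C P Q \<gamma>)"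
  by (simp add: curvature_const_def curvature_quotient_def frob_eq_inner)

lemma curvature_quotient_le_diameter:
  assumes "\<eta> > 0" "\<gamma> > 0" "bounded D" "P \<in> D" "Q \<in> D"
  shows "curvature_quotient \<eta> C P Q \<gamma>
    \<le> max_eigenvalue (transpose (Phi_mat C) ** Phi_mat C) * (diameter D)\<^sup>2 / \<eta>"
proof -
  define \<sigma> where "\<sigma> = max_eigenvalue (transpose (Phi_mat C) ** Phi_mat C)"
  have "(\<Sum>l\<in>UNIV. ((\<gamma> *\<^sub>R (Q - P)) \<bullet> C l)\<^sup>2) = \<gamma>\<^sup>2 * (\<Sum>l\<in>UNIV. ((Q - P) \<bullet> C l)\<^sup>2)"
    by (simp add: power_mult_distrib sum_distrib_left)
  also have "\<dots> \<le> \<gamma>\<^sup>2 * (\<sigma> * (norm (Q - P))\<^sup>2)"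
    using sum_inner_square_le_max_eigenvalue[of "Q - P" C]
    by (intro mult_left_mono) (simp_all add: \<sigma>_def power2_norm_eq_inner)
  also have "\<dots> \<le> \<gamma>\<^sup>2 * (\<sigma> * (diameter D)\<^sup>2)"
    using diameter_bounded_bound[OF assms(3,5,4)] max_eigenvalue_gram_nonneg[of "Phi_mat C"]
    by (intro mult_left_mono power_mono) (auto simp: \<sigma>_def dist_norm)
  finally have "(\<Sum>l\<in>UNIV. ((\<gamma> *\<^sub>R (Q - P)) \<bullet> C l)\<^sup>2) / (2 * \<eta>) \<le> \<gamma>\<^sup>2 * (\<sigma> * (diameter D)\<^sup>2) / (2 * \<eta>)"
    using assms(1) by (intro divide_right_mono) auto
  then have "G_eta \<eta> C (P + \<gamma> *\<^sub>R (Q - P)) - G_eta \<eta> C P - \<gamma> * ((Q - P) \<bullet> M_grad \<eta> C P)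
      \<le> \<gamma>\<^sup>2 * (\<sigma> * (diameter D)\<^sup>2) / (2 * \<eta>)"
    using G_eta_le_quadratic[OF assms(1), of C P "\<gamma> *\<^sub>R (Q - P)"] by simp
  then have "curvature_quotient \<eta> C P Q \<gamma> \<le> 2 / \<gamma>\<^sup>2 * (\<gamma>\<^sup>2 * (\<sigma> * (diameter D)\<^sup>2) / (2 * \<eta>))"
    unfolding curvature_quotient_def by (intro mult_left_mono) auto
  then show ?thesis
    using assms(1,2) by (simp add: \<sigma>_def)
qed

lemma bdd_above_curvature_quotients:
  assumes "\<eta> > 0" "bounded D"
  shows "bdd_above ((\<lambda>(P, Q, \<gamma>). curvature_quotient \<eta> C P Q \<gamma>)
    ` {(P, Q, \<gamma>). P \<in> D \<and> Q \<in> D \<and> 0 < \<gamma> \<and> \<gamma> \<le> 1})"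
  using curvature_quotient_le_diameter[OF assms(1) _ assms(2)] by (intro bdd_aboveI2) auto

lemma curvature_const_le_diameter:
  assumes "\<eta> > 0" "bounded D" "D \<noteq> {}"
  shows "curvature_const \<eta> C D
    \<le> max_eigenvalue (transpose (Phi_mat C) ** Phi_mat C) * (diameter D)\<^sup>2 / \<eta>"
  unfolding curvature_const_eq_SUP
  using assms(3) curvature_quotient_le_diameter[OF assms(1) _ assms(2)]
  by (intro cSUP_least) (auto intro!: exI[of _ 1])

lemma G_eta_le_curvature_const:
  assumes "\<eta> > 0" "bounded D" "P \<in> D" "Q \<in> D" "0 < \<gamma>" "\<gamma> \<le> 1"
  shows "G_eta \<eta> C (P + \<gamma> *\<^sub>R (Q - P))
    \<le> G_eta \<eta> C P + \<gamma> * ((Q - P) \<bullet> M_grad \<eta> C P) + \<gamma>\<^sup>2 / 2 * curvature_const \<eta> C D"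
proof -
  have "curvature_quotient \<eta> C P Q \<gamma> \<le> curvature_const \<eta> C D"
    unfolding curvature_const_eq_SUP using assms
    by (intro cSUP_upper2[OF bdd_above_curvature_quotients[OF assms(1,2)], of "(P, Q, \<gamma>)"]) auto
  then show ?thesis
    using assms(5) unfolding curvature_quotient_def by (simp add: field_simps)
qed

lemma transport_polytope_entry_le_1:
  assumes "P \<in> transport_polytope a b" "(\<Sum>i\<in>UNIV. a $ i) = 1"
  shows "P $ i $ j \<le> 1"
proof -
  have nonneg: "0 \<le> P $ i $ j" for i j
    using assms(1) by (simp add: transport_polytope_def)
  have "P $ i $ j \<le> (\<Sum>j\<in>UNIV. P $ i $ j)"
    using nonneg by (intro member_le_sum) auto
  also have "\<dots> \<le> (\<Sum>i\<in>UNIV. \<Sum>j\<in>UNIV. P $ i $ j)"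
    using nonneg by (intro member_le_sum[of _ _ "\<lambda>i. \<Sum>j\<in>UNIV. P $ i $ j"] sum_nonneg) auto
  also have "\<dots> = 1"
    using assms by (simp add: transport_polytope_def)
  finally show ?thesis .
qed

lemma transport_polytope_inner_self_le_1:
  assumes "P \<in> transport_polytope a b" "(\<Sum>i\<in>UNIV. a $ i) = 1"
  shows "P \<bullet> P \<le> 1"
proof -
  have "P \<bullet> P \<le> (\<Sum>i\<in>UNIV. \<Sum>j\<in>UNIV. P $ i $ j)"
    unfolding inner_vec_def inner_real_def
    using assms(1) transport_polytope_entry_le_1[OF assms]
    by (intro sum_mono mult_left_le) (auto simp: transport_polytope_def)
  also have "\<dots> = 1"
    using assms by (simp add: transport_polytope_def)
  finally show ?thesis .
qed

lemma transport_polytope_inner_nonneg: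
  assumes "P \<in> transport_polytope a b" "Q \<in> transport_polytope a b"
  shows "0 \<le> P \<bullet> Q"
  using assms unfolding inner_vec_def inner_real_def transport_polytope_def
  by (auto intro!: sum_nonneg)

lemma convex_transport_polytope: "convex (transport_polytope a b)"
  unfolding convex_def transport_polytope_def
  by (auto simp: sum.distrib sum_distrib_left[symmetric] simp flip: distrib_left distrib_right)

lemma bounded_transport_polytope:
  assumes "(\<Sum>i\<in>UNIV. a $ i) = 1"
  shows "bounded (transport_polytope a b)"
  unfolding bounded_iff
  using transport_polytope_inner_self_le_1[OF _ assms]
  by (metis norm_eq_sqrt_inner real_sqrt_le_1_iff)

lemma diameter_transport_polytope_le:
  assumes "(\<Sum>i\<in>UNIV. a $ i) = 1"
  shows "(diameter (transport_polytope a b))\<^sup>2 \<le> 2"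
proof -
  have "norm (P - Q) \<le> sqrt 2"
    if "P \<in> transport_polytope a b" "Q \<in> transport_polytope a b" for P Q
  proof (rule real_le_rsqrt)
    have "(norm (P - Q))\<^sup>2 = P \<bullet> P + Q \<bullet> Q - 2 * (P \<bullet> Q)"
      by (simp add: power2_norm_eq_inner inner_diff_left inner_diff_right inner_commute)
    then show "(norm (P - Q))\<^sup>2 \<le> 2"
      using that transport_polytope_inner_self_le_1[OF _ assms] transport_polytope_inner_nonneg
      by (smt (verit))
  qed
  then have "diameter (transport_polytope a b) \<le> sqrt 2"
    by (intro diameter_le) auto
  moreover have "0 \<le> diameter (transport_polytope a b)"
    by (rule diameter_ge_0[OF bounded_transport_polytope[OF assms]])
  ultimately show ?thesis
    by (metis power_mono real_sqrt_pow2 zero_le_numeral)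
qed

lemma curvature_const_transport_polytope_le:
  assumes "\<eta> > 0" "(\<Sum>i\<in>UNIV. a $ i) = 1" "transport_polytope a b \<noteq> {}"
  shows "curvature_const \<eta> C (transport_polytope a b)
    \<le> 2 * max_eigenvalue (transpose (Phi_mat C) ** Phi_mat C) / \<eta>"
proof -
  have "curvature_const \<eta> C (transport_polytope a b)
      \<le> max_eigenvalue (transpose (Phi_mat C) ** Phi_mat C) * (diameter (transport_polytope a b))\<^sup>2 / \<eta>"
    using curvature_const_le_diameter[OF assms(1) bounded_transport_polytope[OF assms(2)] assms(3)] .
  also have "\<dots> \<le> max_eigenvalue (transpose (Phi_mat C) ** Phi_mat C) * 2 / \<eta>"
    using diameter_transport_polytope_le[OF assms(2)] max_eigenvalue_gram_nonneg assms(1)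
    by (intro divide_right_mono mult_left_mono) auto
  finally show ?thesis by (simp add: mult.commute)
qed

lemma frank_wolfe_recurrence_rate:
  fixes h :: "nat \<Rightarrow> real"
  assumes "0 \<le> K"
    and rec: "\<And>t. h (Suc t) \<le> (1 - 2 / (real t + 2)) * h t + (2 / (real t + 2))\<^sup>2 / 2 * K"
    and "1 \<le> t"
  shows "h t \<le> 2 * K / (real t + 2)"
  using \<open>1 \<le> t\<close>
proof (induction t rule: nat_induct_at_least)
  case base
  show ?case using rec[of 0] \<open>0 \<le> K\<close> by simp
next
  case (Suc t)
  define y where "y = real t + 2"
  have "y \<ge> 3" using Suc.hyps by (simp add: y_def)
  have "(1 - 2 / y) * h t \<le> (1 - 2 / y) * (2 * K / y)"
    using Suc.IH \<open>y \<ge> 3\<close> by (intro mult_left_mono) (simp_all add: y_def)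
  moreover have "(1 - 2 / y) * (2 * K / y) + (2 / y)\<^sup>2 / 2 * K = 2 * K * (y - 1) / y\<^sup>2"
    using \<open>y \<ge> 3\<close> by (simp add: field_simps power2_eq_square)
  moreover have "2 * K * (y - 1) / y\<^sup>2 \<le> 2 * K / (y + 1)"
  proof -
    have "2 * K * ((y - 1) * (y + 1)) \<le> 2 * K * y\<^sup>2"
      using \<open>0 \<le> K\<close> by (intro mult_left_mono) (simp_all add: power2_eq_square algebra_simps)
    then show ?thesis
      using \<open>y \<ge> 3\<close> by (simp add: field_simps)
  qed
  moreover have "2 * K / (y + 1) = 2 * K / (real (Suc t) + 2)" by (simp add: y_def)
  ultimately show ?case
    using rec[of t] unfolding y_def by linarith
qed

lemma frank_wolfe_convergence:
  fixes f :: "'a::real_inner \<Rightarrow> real" and g :: "'a \<Rightarrow> 'a" and P :: "nat \<Rightarrow> 'a"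
  assumes "convex D" "bounded D" "x \<in> D" "P 0 \<in> D" "0 \<le> \<delta>"
    and linearization: "\<And>y. y \<in> D \<Longrightarrow> f y + (x - y) \<bullet> g y \<le> f x"
    and descent: "\<And>y z \<gamma>. y \<in> D \<Longrightarrow> z \<in> D \<Longrightarrow> 0 < \<gamma> \<Longrightarrow> \<gamma> \<le> 1 \<Longrightarrow>
      f (y + \<gamma> *\<^sub>R (z - y)) \<le> f y + \<gamma> * ((z - y) \<bullet> g y) + \<gamma>\<^sup>2 / 2 * Cf"
    and step: "\<And>t. \<exists>z \<in> D. z \<bullet> g (P t) \<le> (INF y \<in> D. y \<bullet> g (P t)) + 1/2 * \<delta> * (2 / (real t + 2)) * Cf
      \<and> P (Suc t) = (1 - 2 / (real t + 2)) *\<^sub>R P t + (2 / (real t + 2)) *\<^sub>R z"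
    and "1 \<le> t"
  shows "f (P t) - f x \<le> 2 * (Cf * (1 + \<delta>)) / (real t + 2)"
proof -
  have "0 \<le> Cf" using descent[of x x 1] \<open>x \<in> D\<close> by simp
  have iterate: "P t \<in> D" for t
  proof (induction t)
    case (Suc t)
    obtain z where "z \<in> D" "P (Suc t) = (1 - 2 / (real t + 2)) *\<^sub>R P t + (2 / (real t + 2)) *\<^sub>R z"
      using step[of t] by blast
    then show ?case
      using Suc.IH by (auto intro!: convexD[OF \<open>convex D\<close>])
  qed (use \<open>P 0 \<in> D\<close> in simp)
  have "f (P (Suc t)) - f x \<le> (1 - 2 / (real t + 2)) * (f (P t) - f x)
      + (2 / (real t + 2))\<^sup>2 / 2 * (Cf * (1 + \<delta>))" for t
  proof -
    define \<gamma> where "\<gamma> = 2 / (real t + 2)"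
    obtain z where "z \<in> D" and z_min: "z \<bullet> g (P t) \<le> (INF y \<in> D. y \<bullet> g (P t)) + 1/2 * \<delta> * \<gamma> * Cf"
      and next_iterate: "P (Suc t) = P t + \<gamma> *\<^sub>R (z - P t)"
      using step[of t] unfolding \<gamma>_def by (auto simp: algebra_simps)
    have "bdd_below ((\<lambda>y. y \<bullet> g (P t)) ` D)"
      using bounded_linear_image[OF \<open>bounded D\<close> bounded_linear_inner_left] by (rule bounded_imp_bdd_below)
    then have "(INF y \<in> D. y \<bullet> g (P t)) \<le> x \<bullet> g (P t)"
      using \<open>x \<in> D\<close> by (rule cINF_lower)
    then have "(z - P t) \<bullet> g (P t) \<le> f x - f (P t) + 1/2 * \<delta> * \<gamma> * Cf"
      using z_min linearization[OF iterate[of t]] by (simp add: inner_diff_left)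
    moreover have "0 < \<gamma>" "\<gamma> \<le> 1" by (simp_all add: \<gamma>_def)
    ultimately have "f (P (Suc t)) \<le> f (P t) + \<gamma> * (f x - f (P t) + 1/2 * \<delta> * \<gamma> * Cf) + \<gamma>\<^sup>2 / 2 * Cf"
      using descent[OF iterate[of t] \<open>z \<in> D\<close>] unfolding next_iterate
      by (smt (verit) mult_left_mono)
    then show ?thesis
      unfolding \<gamma>_def[symmetric] by (simp add: algebra_simps power2_eq_square add_divide_distrib)
  qed
  with \<open>0 \<le> Cf\<close> \<open>0 \<le> \<delta>\<close> \<open>1 \<le> t\<close> show ?thesis
    by (intro frank_wolfe_recurrence_rate[where h = "\<lambda>t. f (P t) - f x"]) auto
qed

theorem proposition3:
  fixes \<eta> \<delta> :: real
    and a :: "real^'n::finite" and b :: "real^'m::finite"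
    and C :: "'l::finite \<Rightarrow> real^'m^'n"
    and Pstar :: "real^'m^'n"
    and P :: "nat \<Rightarrow> real^'m^'n"
  assumes eta_pos: "\<eta> > 0"
    and a_nonneg: "\<forall>i. a $ i \<ge> 0" and b_nonneg: "\<forall>j. b $ j \<ge> 0"
    and a_sum: "(\<Sum>i\<in>UNIV. a $ i) = 1" and b_sum: "(\<Sum>j\<in>UNIV. b $ j) = 1"
    and Pstar_mem: "Pstar \<in> transport_polytope a b"
    and Pstar_min: "\<forall>Q \<in> transport_polytope a b. G_eta \<eta> C Pstar \<le> G_eta \<eta> C Q"
    and delta_nonneg: "\<delta> \<ge> 0"
    and P0: "P 0 \<in> transport_polytope a b"
    and step: "\<forall>t::nat. \<exists>Phat \<in> transport_polytope a b.
        frob Phat (M_grad \<eta> C (P t))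
          \<le> (INF Q \<in> transport_polytope a b. frob Q (M_grad \<eta> C (P t)))
             + 1/2 * \<delta> * (2 / (real t + 2)) * curvature_const \<eta> C (transport_polytope a b)
        \<and> P (Suc t) = (1 - 2 / (real t + 2)) *\<^sub>R P t + (2 / (real t + 2)) *\<^sub>R Phat"
  shows "\<forall>t::nat. t \<ge> 1 \<longrightarrow>
           G_eta \<eta> C (P t) - G_eta \<eta> C Pstar
             \<le> 4 * max_eigenvalue (transpose (Phi_mat C) ** Phi_mat C) / (\<eta> * (real t + 2)) * (1 + \<delta>)"
proof (intro allI impI)
  fix t :: nat
  assume "1 \<le> t"
  define D where "D = transport_polytope a b"
  define \<sigma> where "\<sigma> = max_eigenvalue (transpose (Phi_mat C) ** Phi_mat C)"
  have D: "convex D" "bounded D" "Pstar \<in> D" "P 0 \<in> D"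
    using convex_transport_polytope bounded_transport_polytope[OF a_sum] Pstar_mem P0
    by (simp_all add: D_def)
  note step' = step[unfolded frob_eq_inner D_def[symmetric], rule_format]
  have "G_eta \<eta> C (P t) - G_eta \<eta> C Pstar \<le> 2 * (curvature_const \<eta> C D * (1 + \<delta>)) / (real t + 2)"
    by (rule frank_wolfe_convergence[where P = P, OF D delta_nonneg G_eta_ge_linearization[OF eta_pos]
          G_eta_le_curvature_const[OF eta_pos \<open>bounded D\<close>] step' \<open>1 \<le> t\<close>])
  also have "\<dots> \<le> 2 * (2 * \<sigma> / \<eta> * (1 + \<delta>)) / (real t + 2)"
    using curvature_const_transport_polytope_le[OF eta_pos a_sum, of b C] Pstar_mem delta_nonneg
    unfolding D_def \<sigma>_def by (intro divide_right_mono mult_left_mono mult_right_mono) auto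
  also have "\<dots> = 4 * \<sigma> / (\<eta> * (real t + 2)) * (1 + \<delta>)"
    by (simp add: field_simps)
  finally show "G_eta \<eta> C (P t) - G_eta \<eta> C Pstar
      \<le> 4 * max_eigenvalue (transpose (Phi_mat C) ** Phi_mat C) / (\<eta> * (real t + 2)) * (1 + \<delta>)"
    unfolding \<sigma>_def .
qed

end
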